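(* Let $\alpha\in(0,1)$ be irrational, and let $$B_n=\Big|\prod_{t=1}^{q_n-1}\frac{s_{nt}}{2\sin(\pi t/q_n)}\Big|,\qquad M_n=\lfloor(q_n-1)/2\rfloor,\qquad \tau_n=\lfloor q_n^{1/2}\rfloor.$$ Then for sufficiently large $n$, $$\log(B_n)=-2\pi^2\frac{c_n}{q_n^2}\sum_{t=1}^{M_n-1}\frac{D_t(\alpha_n^-)}{\sin(\pi t/q_n)\sin(\pi(t+1)/q_n)}-2\sum_{t=1}^{\tau_n}\sum_{j=2}^{\tau_n}\frac1j\Big(\frac{c_n\xi_{nt}}{t}\Big)^j+O(\tau_n^{-1}).$$
   Context: Continued fraction notation: - $\alpha=[0;a_1,a_2,\ldots]$. - $q_0=0$, $q_1=1$, $q_{n+1}=a_nq_n+q_{n-1}$, and $p_0=1$, $p_1=0$, $p_{n+1}=a_np_n+p_{n-1}$. - $\Lambda_n=q_n\alpha-p_n$. - $\alpha_n^+=[a_n;a_{n+1},\ldots]$ and $\alpha_n^-=[0;a_{n-1},\ldots,a_1]=q_{n-1}/q_n$. - $c_n=1/(\alpha_n^++\alpha_n^-)$. Auxiliary quantities, for $t\in\{0,\ldots,q_n-1\}$: - $\xi_{nt}=\{tq_{n-1}/q_n\}-\frac12$; - $s_{nt}=2\sin\big(\pi[t/q_n-|\Lambda_n|\xi_{nt}]\big)$. $D_t(\beta)=\sum_{s=1}^t(\{\beta s\}-\frac12)$. The $O$-constant is independent of $n$. *)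

theory Defs
  imports Complex_Main
begin

text \<open>Continued fraction expansion alpha = [0; a_1, a_2, ...] via the Gauss map:
  r_0 = alpha, r_(k+1) = frac (1 / r_k), a_n = floor (1 / r_(n-1)) for n >= 1.
  Then 1 / r_(n-1) = [a_n; a_(n+1), ...].\<close>

fun cf_r :: "real \<Rightarrow> nat \<Rightarrow> real" where
  "cf_r \<alpha> 0 = \<alpha>"
| "cf_r \<alpha> (Suc k) = frac (1 / cf_r \<alpha> k)"

definition cf_a :: "real \<Rightarrow> nat \<Rightarrow> nat" where
  "cf_a \<alpha> n = nat \<lfloor>1 / cf_r \<alpha> (n - 1)\<rfloor>"

fun cf_q :: "real \<Rightarrow> nat \<Rightarrow> nat" where
  "cf_q \<alpha> 0 = 0"
| "cf_q \<alpha> (Suc 0) = 1"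
| "cf_q \<alpha> (Suc (Suc n)) = cf_a \<alpha> (Suc n) * cf_q \<alpha> (Suc n) + cf_q \<alpha> n"

fun cf_p :: "real \<Rightarrow> nat \<Rightarrow> nat" where
  "cf_p \<alpha> 0 = 1"
| "cf_p \<alpha> (Suc 0) = 0"
| "cf_p \<alpha> (Suc (Suc n)) = cf_a \<alpha> (Suc n) * cf_p \<alpha> (Suc n) + cf_p \<alpha> n"

definition Lambda :: "real \<Rightarrow> nat \<Rightarrow> real" where
  "Lambda \<alpha> n = real (cf_q \<alpha> n) * \<alpha> - real (cf_p \<alpha> n)"

definition alpha_plus :: "real \<Rightarrow> nat \<Rightarrow> real" where
  "alpha_plus \<alpha> n = 1 / cf_r \<alpha> (n - 1)"

text \<open>alpha_n^- = [0; a_(n-1), ..., a_1] = q_(n-1)/q_n.\<close>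
definition alpha_minus :: "real \<Rightarrow> nat \<Rightarrow> real" where
  "alpha_minus \<alpha> n = real (cf_q \<alpha> (n - 1)) / real (cf_q \<alpha> n)"

definition cn :: "real \<Rightarrow> nat \<Rightarrow> real" where
  "cn \<alpha> n = 1 / (alpha_plus \<alpha> n + alpha_minus \<alpha> n)"

definition xi :: "real \<Rightarrow> nat \<Rightarrow> nat \<Rightarrow> real" where
  "xi \<alpha> n t = frac (real t * real (cf_q \<alpha> (n - 1)) / real (cf_q \<alpha> n)) - 1 / 2"

definition snt :: "real \<Rightarrow> nat \<Rightarrow> nat \<Rightarrow> real" where
  "snt \<alpha> n t = 2 * sin (pi * (real t / real (cf_q \<alpha> n) - \<bar>Lambda \<alpha> n\<bar> * xi \<alpha> n t))"

definition Dt :: "nat \<Rightarrow> real \<Rightarrow> real" where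
  "Dt t \<beta> = (\<Sum>s = 1..t. frac (\<beta> * real s) - 1 / 2)"

definition Bn :: "real \<Rightarrow> nat \<Rightarrow> real" where
  "Bn \<alpha> n = \<bar>\<Prod>t = 1..cf_q \<alpha> n - 1. snt \<alpha> n t / (2 * sin (pi * real t / real (cf_q \<alpha> n)))\<bar>"

definition Mn :: "real \<Rightarrow> nat \<Rightarrow> nat" where
  "Mn \<alpha> n = (cf_q \<alpha> n - 1) div 2"

definition taun :: "real \<Rightarrow> nat \<Rightarrow> nat" where
  "taun \<alpha> n = nat \<lfloor>sqrt (real (cf_q \<alpha> n))\<rfloor>"

end

theory Submission
  imports Defs
begin

text \<open>Write \<open>x\<^sub>t = \<pi> t / q\<^sub>n\<close> and \<open>d\<^sub>t = \<pi> \<bar>\<Lambda>\<^sub>n\<bar> \<xi>\<^sub>n\<^sub>t = \<pi> c\<^sub>n \<xi>\<^sub>n\<^sub>t / q\<^sub>n\<close>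
  (the identity \<open>\<bar>\<Lambda>\<^sub>n\<bar> = c\<^sub>n / q\<^sub>n\<close> comes from the complete quotients), so that \<open>B\<^sub>n\<close> is the
  product of \<open>r\<^sub>t = sin (x\<^sub>t - d\<^sub>t) / sin x\<^sub>t\<close> over \<open>0 < t < q\<^sub>n\<close>. As \<open>q\<^sub>n\<^sub>-\<^sub>1\<close> is coprime to
  \<open>q\<^sub>n\<close>, \<open>t \<mapsto> q\<^sub>n - t\<close> flips the sign of \<open>\<xi>\<^sub>n\<^sub>t\<close> and fixes \<open>r\<^sub>t\<close>, so \<open>ln B\<^sub>n\<close> is twice
  the sum over \<open>t \<le> M\<^sub>n\<close>. There \<open>ln r\<^sub>t = - d\<^sub>t cot x\<^sub>t + O(q\<^sub>n\<^sup>-\<^sup>2 + t\<^sup>-\<^sup>2)\<close>, and the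
  \<open>t\<^sup>-\<^sup>2\<close> errors summed over \<open>t > \<tau>\<^sub>n\<close> are \<open>O(1/\<tau>\<^sub>n)\<close>. For \<open>t \<le> \<tau>\<^sub>n\<close> one expands
  further: \<open>d\<^sub>t cot x\<^sub>t = v\<^sub>t + O(t / q\<^sub>n\<^sup>2)\<close> with \<open>v\<^sub>t = c\<^sub>n \<xi>\<^sub>n\<^sub>t / t\<close>, and \<open>ln (1 - v\<^sub>t)\<close> is
  replaced by its Taylor polynomial of degree \<open>\<tau>\<^sub>n\<close>, the error being \<open>O(2\<^sup>-\<^sup>\<tau>)\<close> as
  \<open>\<bar>v\<^sub>t\<bar> \<le> 1/2\<close>. Finally \<open>\<Sum> d\<^sub>t cot x\<^sub>t\<close> is summed by parts against \<open>D\<^sub>t(\<alpha>\<^sub>n\<^sup>-) = \<Sum>\<^sub>s\<^sub>\<le>\<^sub>t \<xi>\<^sub>n\<^sub>s\<close>,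
  using \<open>cot x\<^sub>t - cot x\<^sub>t\<^sub>+\<^sub>1 = sin (\<pi>/q\<^sub>n) / (sin x\<^sub>t sin x\<^sub>t\<^sub>+\<^sub>1)\<close>; the boundary term and
  the replacement of \<open>sin (\<pi>/q\<^sub>n)\<close> by \<open>\<pi>/q\<^sub>n\<close> cost only \<open>O(1/q\<^sub>n)\<close>.\<close>

section \<open>Elementary inequalities\<close>

lemma cos_ge_one_minus_sq_half: "1 - x\<^sup>2 / 2 \<le> cos (x::real)"
proof -
  have "1 - x\<^sup>2 / 2 \<le> cos x" if "0 \<le> x" for x :: real
  proof -
    let ?f = "\<lambda>x. cos x - 1 + x\<^sup>2 / 2"
    have "?f 0 \<le> ?f x"
    proof (rule DERIV_nonneg_imp_nondecreasing[OF that])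
      fix y :: real assume "0 \<le> y" "y \<le> x"
      then show "\<exists>d. DERIV ?f y :> d \<and> 0 \<le> d"
        by (intro exI[of _ "y - sin y"]) (auto intro!: derivative_eq_intros simp: sin_x_le_x)
    qed
    then show ?thesis by simp
  qed
  from this[of x] this[of "-x"] show ?thesis by (cases "0 \<le> x") auto
qed

lemma sin_ge_x_minus_cube:
  fixes x :: real assumes "0 \<le> x" shows "x - x ^ 3 / 6 \<le> sin x"
proof -
  let ?f = "\<lambda>x. sin x - x + x ^ 3 / 6"
  have "?f 0 \<le> ?f x"
  proof (rule DERIV_nonneg_imp_nondecreasing[OF assms])
    fix y :: real
    show "\<exists>d. DERIV ?f y :> d \<and> 0 \<le> d"
      using cos_ge_one_minus_sq_half[of y]
      by (intro exI[of _ "cos y - 1 + y\<^sup>2 / 2"])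
        (auto intro!: derivative_eq_intros simp: power2_eq_square power3_eq_cube)
  qed
  then show ?thesis by simp
qed

lemma abs_sin_minus_le: "\<bar>sin x - x\<bar> \<le> \<bar>x\<bar> ^ 3 / 6" for x :: real
proof (cases "0 \<le> x")
  case True
  then show ?thesis using sin_ge_x_minus_cube[OF True] sin_x_le_x[OF True] by auto
next
  case False
  then have "0 \<le> -x" by simp
  from sin_ge_x_minus_cube[OF this] sin_x_le_x[OF this] False show ?thesis
    by (auto simp: abs_if)
qed

lemma x_cos_le_sin:
  fixes x :: real assumes "0 \<le> x" "x \<le> pi" shows "x * cos x \<le> sin x"
proof -
  let ?f = "\<lambda>x. sin x - x * cos x"
  have "?f 0 \<le> ?f x"
  proof (rule DERIV_nonneg_imp_nondecreasing[OF assms(1)])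
    fix y :: real assume "0 \<le> y" "y \<le> x"
    moreover have "0 \<le> sin y" using \<open>0 \<le> y\<close> \<open>y \<le> x\<close> assms by (intro sin_ge_zero) auto
    ultimately show "\<exists>d. DERIV ?f y :> d \<and> 0 \<le> d"
      by (intro exI[of _ "y * sin y"]) (auto intro!: derivative_eq_intros simp: algebra_simps)
  qed
  then show ?thesis by simp
qed

lemma x_div_3_le_sin:
  fixes x :: real assumes "0 \<le> x" "x \<le> 2" shows "x / 3 \<le> sin x"
proof -
  have "x ^ 3 \<le> 4 * x"
    using assms mult_mono[of x 2 x 2] by (simp add: power3_eq_cube mult_right_mono)
  then show ?thesis using sin_ge_x_minus_cube[OF assms(1)] by linarith
qed

lemma x_cot_le_one:
  fixes x :: real assumes "0 < x" "x < pi" shows "x * cot x \<le> 1"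
  using x_cos_le_sin[of x] sin_gt_zero[OF assms] assms by (simp add: cot_def divide_simps)

lemma x_cot_ge_one_minus_sq_half:
  fixes x :: real assumes "0 < x" "x \<le> pi / 2" shows "1 - x\<^sup>2 / 2 \<le> x * cot x"
proof -
  have "0 < sin x" using assms by (intro sin_gt_zero) auto
  moreover have "sin x * cos x \<le> x * cos x"
    using assms by (intro mult_right_mono sin_x_le_x cos_ge_zero) auto
  ultimately have "cos x \<le> x * cot x" by (simp add: cot_def divide_simps mult.commute)
  then show ?thesis using cos_ge_one_minus_sq_half[of x] by linarith
qed

lemma cot_diff_eq:
  assumes "sin a \<noteq> 0" "sin b \<noteq> 0"
  shows "cot a - cot b = sin (b - a) / (sin a * sin b)"
  using assms by (simp add: cot_def sin_diff field_simps)

text \<open>The hypothesis on \<open>d cot x\<close> lets the cubic Taylor term of \<open>sin d\<close> be absorbed into \<open>d\<^sup>2\<close>.\<close>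
lemma sin_diff_div_sin_approx:
  fixes x d :: real
  assumes "0 < x" "x < pi / 2" "\<bar>d * cot x\<bar> \<le> 1"
  shows "\<bar>sin (x - d) / sin x - (1 - d * cot x)\<bar> \<le> d\<^sup>2"
proof -
  have "0 < sin x" using assms by (intro sin_gt_zero) auto
  have cot: "0 \<le> cot x" using cot_gt_zero[OF assms(1,2)] by simp
  have eq: "sin (x - d) / sin x - (1 - d * cot x) = (cos d - 1) - cot x * (sin d - d)"
    using \<open>0 < sin x\<close> by (simp add: sin_diff cot_def field_simps)
  have cos: "\<bar>cos d - 1\<bar> \<le> d\<^sup>2 / 2"
    using cos_ge_one_minus_sq_half[of d] cos_le_one[of d] by (simp add: abs_of_nonpos)
  have "\<bar>cot x * (sin d - d)\<bar> \<le> cot x * (\<bar>d\<bar> ^ 3 / 6)"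
    unfolding abs_mult abs_of_nonneg[OF cot] by (intro mult_left_mono abs_sin_minus_le cot)
  also have "\<dots> = \<bar>d * cot x\<bar> * d\<^sup>2 / 6"
    using cot by (simp add: abs_mult power2_eq_square power3_eq_cube)
  also have "\<dots> \<le> d\<^sup>2 / 6"
    using assms(3) mult_right_mono[OF assms(3), of "d\<^sup>2"] by simp
  finally have "\<bar>cot x * (sin d - d)\<bar> \<le> d\<^sup>2 / 6" .
  then show ?thesis unfolding eq using cos by linarith
qed

lemma abs_ln_diff_le:
  fixes a b m :: real
  assumes "0 < m" "m \<le> a" "m \<le> b"
  shows "\<bar>ln a - ln b\<bar> \<le> \<bar>a - b\<bar> / m"
proof -
  have "ln x - ln y \<le> \<bar>a - b\<bar> / m" if "x \<in> {a, b}" "y \<in> {a, b}" for x y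
  proof -
    have "0 < x" "0 < y" "m \<le> y" using that assms by auto
    then have "ln x - ln y \<le> (x - y) / y"
      using ln_le_minus_one[of "x / y"] by (simp add: ln_div diff_divide_distrib)
    also have "\<dots> \<le> \<bar>x - y\<bar> / y" using \<open>0 < y\<close> by (intro divide_right_mono) auto
    also have "\<dots> \<le> \<bar>x - y\<bar> / m" using \<open>m \<le> y\<close> assms(1) by (intro divide_left_mono) auto
    also have "\<bar>x - y\<bar> \<le> \<bar>a - b\<bar>" using that by auto
    finally show ?thesis using assms(1) by (simp add: divide_right_mono)
  qed
  from this[of a b] this[of b a] show ?thesis by (simp add: abs_le_iff)
qed

lemma abs_power_Suc_div_le: "\<bar>v ^ Suc n / real (Suc n)\<bar> \<le> \<bar>v\<bar> ^ Suc n" for v :: real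
proof -
  have "\<bar>v ^ Suc n / real (Suc n)\<bar> = \<bar>v\<bar> ^ Suc n / real (Suc n)"
    by (simp add: abs_divide abs_mult power_abs)
  also have "\<dots> \<le> \<bar>v\<bar> ^ Suc n / 1" by (intro divide_left_mono) auto
  finally show ?thesis by simp
qed

lemma sums_minus_ln_one_minus:
  fixes v :: real assumes "\<bar>v\<bar> < 1"
  shows "(\<lambda>n. v ^ Suc n / real (Suc n)) sums - ln (1 - v)"
proof -
  have "summable (\<lambda>n. \<bar>v\<bar> ^ Suc n)"
    using assms by (subst summable_Suc_iff) (simp add: summable_geometric)
  then have summable: "summable (\<lambda>n. v ^ Suc n / real (Suc n))"
    by (rule summable_comparison_test'[where N = 0]) (simp only: real_norm_def abs_power_Suc_div_le)
  have "ln (1 - v) = (\<Sum>n. (-1) ^ n * (1 / real (n + 1)) * ((1 - v) - 1) ^ Suc n)"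
    using assms by (intro ln_series) auto
  also have "\<dots> = (\<Sum>n. - (v ^ Suc n / real (Suc n)))"
  proof (intro arg_cong[where f = suminf] ext)
    fix n
    have "(-1) ^ n * (- v) ^ Suc n = - (v ^ Suc n)" by (induct n) (auto simp: algebra_simps)
    then show "(-1) ^ n * (1 / real (n + 1)) * ((1 - v) - 1) ^ Suc n = - (v ^ Suc n / real (Suc n))"
      by (simp only: diff_diff_cancel diff_minus_eq_add mult_ac) simp
  qed
  also have "\<dots> = - (\<Sum>n. v ^ Suc n / real (Suc n))"
    using summable by (rule suminf_minus)
  finally show ?thesis using summable by (simp add: summable_sums)
qed

lemma ln_one_minus_taylor:
  fixes v :: real assumes v: "\<bar>v\<bar> \<le> 1 / 2"
  shows "\<bar>ln (1 - v) + (\<Sum>j = 1..m. (1 / real j) * v ^ j)\<bar> \<le> 2 * \<bar>v\<bar> ^ (m + 1)"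
proof -
  define a where "a n = v ^ Suc n / real (Suc n)" for n
  have "a sums - ln (1 - v)" unfolding a_def using v by (intro sums_minus_ln_one_minus) auto
  then have "summable a" "- ln (1 - v) = suminf a" by (simp_all add: sums_iff)
  then have "- ln (1 - v) = (\<Sum>n. a (n + m)) + (\<Sum>i<m. a i)"
    by (simp add: suminf_split_initial_segment[of a m])
  moreover have "(\<Sum>i<m. a i) = (\<Sum>j = 1..m. (1 / real j) * v ^ j)"
    by (induct m) (auto simp: a_def lessThan_Suc)
  ultimately have eq: "ln (1 - v) + (\<Sum>j = 1..m. (1 / real j) * v ^ j) = - (\<Sum>n. a (n + m))"
    by simp
  have geom: "summable (\<lambda>n. \<bar>v\<bar> ^ (m + 1) * \<bar>v\<bar> ^ n)"
    using v by (intro summable_mult summable_geometric) auto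
  have tail_le: "\<bar>a (n + m)\<bar> \<le> \<bar>v\<bar> ^ (m + 1) * \<bar>v\<bar> ^ n" for n
    using abs_power_Suc_div_le[of v "n + m"] by (simp add: a_def power_add[symmetric] ac_simps)
  then have abs_tail: "summable (\<lambda>n. \<bar>a (n + m)\<bar>)"
    by (intro summable_comparison_test'[OF geom, where N = 0]) (simp only: real_norm_def abs_abs)
  have "\<bar>\<Sum>n. a (n + m)\<bar> \<le> (\<Sum>n. \<bar>a (n + m)\<bar>)" using abs_tail by (rule summable_rabs)
  also have "\<dots> \<le> (\<Sum>n. \<bar>v\<bar> ^ (m + 1) * \<bar>v\<bar> ^ n)"
    using abs_tail geom tail_le by (intro suminf_le) auto
  also have "\<dots> = \<bar>v\<bar> ^ (m + 1) * (1 / (1 - \<bar>v\<bar>))"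
    using v by (subst suminf_mult) (auto simp: summable_geometric suminf_geometric)
  also have "\<dots> \<le> \<bar>v\<bar> ^ (m + 1) * 2"
    using v by (intro mult_left_mono) (auto simp: field_simps)
  finally show ?thesis using eq by simp
qed

lemma sum_inverse_square_le:
  assumes "1 \<le> a" "a \<le> b"
  shows "(\<Sum>t\<in>{a<..b}. 1 / real t ^ 2) \<le> 1 / real a - 1 / real b"
  using assms(2)
proof (induction b rule: dec_induct)
  case base
  then show ?case by simp
next
  case (step b)
  have b: "1 \<le> real b" using assms step by simp
  have "1 / real (Suc b) ^ 2 \<le> 1 / (real b * real (Suc b))"
    using b by (intro divide_left_mono) (auto simp: power2_eq_square)
  also have "\<dots> = 1 / real b - 1 / real (Suc b)" using b by (simp add: field_simps)
  finally have "1 / real (Suc b) ^ 2 \<le> 1 / real b - 1 / real (Suc b)" .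
  moreover have "{a<..Suc b} = insert (Suc b) {a<..b}" using step by auto
  ultimately show ?case using step by simp
qed

lemma square_le_two_pow_Suc: "n\<^sup>2 \<le> (2::nat) ^ Suc n"
proof (induction n rule: less_induct)
  case (less n)
  show ?case
  proof (cases "n \<le> 3")
    case True
    then have "n \<in> {0, 1, 2, 3}" by auto
    then show ?thesis by auto
  next
    case False
    then obtain k where k: "n = Suc k" "3 \<le> k" by (cases n) auto
    have "3 * k \<le> k * k" using k by (intro mult_le_mono1)
    moreover have "n\<^sup>2 = k * k + 2 * k + 1" using k by (simp add: power2_eq_square)
    ultimately have "n\<^sup>2 \<le> 2 * k\<^sup>2" using k(2) unfolding power2_eq_square by linarith
    also have "\<dots> \<le> 2 * 2 ^ Suc k" using less k by auto
    finally show ?thesis using k by simp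
  qed
qed

lemma summation_by_parts:
  fixes D g :: "nat \<Rightarrow> 'a::comm_ring" assumes "D 0 = 0"
  shows "(\<Sum>t = 1..m. (D t - D (t - 1)) * g t)
    = D m * g m + (\<Sum>t = 1..m - 1. D t * (g t - g (t + 1)))"
proof (induction m)
  case 0
  then show ?case using assms by simp
next
  case (Suc m)
  then show ?case
    using assms by (cases m) (simp_all add: sum.cl_ivl_Suc algebra_simps)
qed

lemma sum_symmetric_fold:
  fixes f :: "nat \<Rightarrow> 'a::comm_semiring_1"
  assumes reflect: "\<And>t. 0 < t \<Longrightarrow> t < q \<Longrightarrow> f (q - t) = f t"
    and middle: "\<And>t. 2 * t = q \<Longrightarrow> f t = 0"
  shows "(\<Sum>t = 1..q - 1. f t) = 2 * (\<Sum>t = 1..(q - 1) div 2. f t)"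
proof -
  let ?A = "{1..q - 1}" and ?low = "\<lambda>t. if 2 * t < q then f t else 0"
  have "(\<Sum>t\<in>?A. f t) = (\<Sum>t\<in>?A. ?low t) + (\<Sum>t\<in>?A. if q < 2 * t then f t else 0)"
    unfolding sum.distrib[symmetric] using middle by (intro sum.cong) auto
  also have "(\<Sum>t\<in>?A. if q < 2 * t then f t else 0)
      = (\<Sum>t\<in>?A. if q < 2 * (q - 1 + 1 - t) then f (q - 1 + 1 - t) else 0)"
    by (rule sum.atLeastAtMost_rev)
  also have "\<dots> = (\<Sum>t\<in>?A. ?low t)"
    using reflect by (intro sum.cong) auto
  also have "(\<Sum>t\<in>?A. ?low t) = (\<Sum>t\<in>{t\<in>?A. 2 * t < q}. f t)"
    by (subst sum.inter_filter) auto
  also have "{t\<in>?A. 2 * t < q} = {1..(q - 1) div 2}" by auto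
  finally show ?thesis by (simp add: mult_2)
qed

section \<open>Continued fractions\<close>

lemma coprime_cf_q_Suc: "coprime (cf_q \<alpha> n) (cf_q \<alpha> (Suc n))"
proof (induction n)
  case (Suc n)
  then have "coprime (cf_q \<alpha> (Suc n)) (cf_a \<alpha> (Suc n) * cf_q \<alpha> (Suc n) + cf_q \<alpha> n)"
    by (simp add: coprime_iff_gcd_eq_1 gcd_add_mult gcd.commute)
  then show ?case by simp
qed simp

lemma cf_det:
  "real (cf_q \<alpha> (Suc n)) * real (cf_p \<alpha> n) - real (cf_p \<alpha> (Suc n)) * real (cf_q \<alpha> n) = (-1) ^ n"
  by (induction n) (simp_all add: algebra_simps)

context
  fixes \<alpha> :: real
  assumes \<alpha>_pos: "0 < \<alpha>" and \<alpha>_less_1: "\<alpha> < 1" and \<alpha>_irrational: "\<alpha> \<notin> \<rat>"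
begin

lemma cf_r_irrational_in_unit_interval: "cf_r \<alpha> k \<notin> \<rat> \<and> 0 < cf_r \<alpha> k \<and> cf_r \<alpha> k < 1"
proof (induction k)
  case 0
  then show ?case using \<alpha>_pos \<alpha>_less_1 \<alpha>_irrational by simp
next
  case (Suc k)
  let ?r = "cf_r \<alpha> k"
  have "1 / ?r \<notin> \<rat>" using Suc Rats_divide[OF Rats_1, of "1 / ?r"] by auto
  then have irr: "frac (1 / ?r) \<notin> \<rat>"
    using Rats_add[of "frac (1 / ?r)" "of_int \<lfloor>1 / ?r\<rfloor>"] by (auto simp: frac_def)
  then have "0 < frac (1 / ?r)" using frac_ge_0 by (metis Rats_0 order_le_less)
  then show ?case using irr frac_lt_1 by simp
qed

lemma cf_r_pos: "0 < cf_r \<alpha> k"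
  using cf_r_irrational_in_unit_interval by blast

lemma one_less_inverse_cf_r: "1 < 1 / cf_r \<alpha> k"
  using cf_r_pos[of k] cf_r_irrational_in_unit_interval by (simp add: less_divide_eq)

lemma cf_a_Suc_eq: "real (cf_a \<alpha> (Suc k)) = 1 / cf_r \<alpha> k - cf_r \<alpha> (Suc k)"
proof -
  have "0 \<le> \<lfloor>1 / cf_r \<alpha> k\<rfloor>" using one_less_inverse_cf_r[of k] cf_r_pos[of k] by simp
  then show ?thesis by (simp add: cf_a_def frac_def)
qed

lemma cf_a_Suc_ge_1: "1 \<le> cf_a \<alpha> (Suc k)"
proof -
  have "1 \<le> \<lfloor>1 / cf_r \<alpha> k\<rfloor>" using one_less_inverse_cf_r[of k] by (simp only: le_floor_iff)
  then show ?thesis unfolding cf_a_def using nat_mono by fastforce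
qed

lemma cf_q_Suc_ge: "max 1 n \<le> cf_q \<alpha> (Suc n)"
proof (induction n rule: less_induct)
  case (less n)
  consider "n = 0" | "n = 1" | k where "n = Suc (Suc k)"
    by (metis One_nat_def not0_implies_Suc)
  then show ?case
  proof cases
    case 2
    then show ?thesis using cf_a_Suc_ge_1[of 0] by simp
  next
    case 3
    have "cf_q \<alpha> (Suc n) = cf_a \<alpha> (Suc (Suc k)) * cf_q \<alpha> (Suc (Suc k)) + cf_q \<alpha> (Suc k)"
      unfolding 3 by (rule cf_q.simps(3))
    moreover have "cf_q \<alpha> (Suc (Suc k)) \<le> cf_a \<alpha> (Suc (Suc k)) * cf_q \<alpha> (Suc (Suc k))"
      using cf_a_Suc_ge_1[of "Suc k"] by simp
    moreover have "Suc k \<le> cf_q \<alpha> (Suc (Suc k))" "1 \<le> cf_q \<alpha> (Suc k)"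
      using less[of k] less[of "Suc k"] 3 by auto
    ultimately show ?thesis using 3 by linarith
  qed simp
qed

lemma alpha_mult_cf_q_eq:
  "\<alpha> * (real (cf_q \<alpha> (Suc n)) + cf_r \<alpha> n * real (cf_q \<alpha> n))
    = real (cf_p \<alpha> (Suc n)) + cf_r \<alpha> n * real (cf_p \<alpha> n)"
proof (induction n)
  case 0
  then show ?case by simp
next
  case (Suc n)
  let ?r = "cf_r \<alpha> n" and ?r' = "cf_r \<alpha> (Suc n)" and ?a = "real (cf_a \<alpha> (Suc n))"
  have ra: "?r * (?a + ?r') = 1" using cf_a_Suc_eq[of n] cf_r_pos[of n] by simp
  have "?r * (\<alpha> * (real (cf_q \<alpha> (Suc (Suc n))) + ?r' * real (cf_q \<alpha> (Suc n))))
      = \<alpha> * (real (cf_q \<alpha> (Suc n)) * (?r * (?a + ?r')) + ?r * real (cf_q \<alpha> n))"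
    by (simp add: algebra_simps)
  also have "\<dots> = real (cf_p \<alpha> (Suc n)) * (?r * (?a + ?r')) + ?r * real (cf_p \<alpha> n)"
    using Suc ra by (simp add: algebra_simps)
  also have "\<dots> = ?r * (real (cf_p \<alpha> (Suc (Suc n))) + ?r' * real (cf_p \<alpha> (Suc n)))"
    by (simp add: algebra_simps)
  finally show ?case using cf_r_pos[of n] by simp
qed

lemma abs_Lambda_eq: "\<bar>Lambda \<alpha> (Suc n)\<bar> = cn \<alpha> (Suc n) / real (cf_q \<alpha> (Suc n))"
proof -
  let ?Q1 = "real (cf_q \<alpha> (Suc n))" and ?Q0 = "real (cf_q \<alpha> n)" and ?r = "cf_r \<alpha> n"
  let ?P1 = "real (cf_p \<alpha> (Suc n))" and ?P0 = "real (cf_p \<alpha> n)"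
  have Q1: "0 < ?Q1" using cf_q_Suc_ge[of n] by simp
  have r: "0 < ?r" by (rule cf_r_pos)
  have den: "0 < ?Q1 + ?r * ?Q0" using Q1 r by (simp add: add_pos_nonneg)
  have "(?Q1 + ?r * ?Q0) * (?Q1 * \<alpha> - ?P1)
      = ?Q1 * (\<alpha> * (?Q1 + ?r * ?Q0)) - ?P1 * (?Q1 + ?r * ?Q0)"
    by (simp add: algebra_simps)
  also have "\<dots> = ?r * (?Q1 * ?P0 - ?P1 * ?Q0)"
    unfolding alpha_mult_cf_q_eq by (simp add: algebra_simps)
  also have "\<dots> = ?r * (-1) ^ n" by (simp add: cf_det)
  finally have "Lambda \<alpha> (Suc n) = ?r * (-1) ^ n / (?Q1 + ?r * ?Q0)"
    using den by (simp add: Lambda_def field_simps)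
  then have "\<bar>Lambda \<alpha> (Suc n)\<bar> = ?r / (?Q1 + ?r * ?Q0)"
    using den r by (simp add: abs_mult power_abs)
  also have "\<dots> = cn \<alpha> (Suc n) / ?Q1"
  proof -
    have "cn \<alpha> (Suc n) / ?Q1 = 1 / ((1 / ?r + ?Q0 / ?Q1) * ?Q1)"
      by (simp add: cn_def alpha_plus_def alpha_minus_def)
    also have "(1 / ?r + ?Q0 / ?Q1) * ?Q1 = (?Q1 + ?r * ?Q0) / ?r"
      using Q1 r by (simp add: field_simps)
    finally show ?thesis by simp
  qed
  finally show ?thesis .
qed

lemma cn_pos: "0 < cn \<alpha> (Suc n)" and cn_less_1: "cn \<alpha> (Suc n) < 1"
proof -
  have "1 < alpha_plus \<alpha> (Suc n)" "0 \<le> alpha_minus \<alpha> (Suc n)"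
    using one_less_inverse_cf_r[of n] by (simp_all add: alpha_plus_def alpha_minus_def)
  then show "0 < cn \<alpha> (Suc n)" "cn \<alpha> (Suc n) < 1" by (simp_all add: cn_def)
qed

end

section \<open>The sine product\<close>

text \<open>For the theorem, \<open>q = q\<^sub>n\<close>, \<open>h = q\<^sub>n\<^sub>-\<^sub>1\<close> and \<open>c = c\<^sub>n\<close>: then \<open>saw t = \<xi>\<^sub>n\<^sub>t\<close>,
  \<open>shift t = \<pi> \<bar>\<Lambda>\<^sub>n\<bar> \<xi>\<^sub>n\<^sub>t\<close>, and \<open>ratio t\<close> is the \<open>t\<close>-th factor of \<open>B\<^sub>n\<close>.\<close>

locale sine_product =
  fixes q h :: nat and c :: real
  assumes q_ge_16: "16 \<le> q" and coprime_h_q: "coprime h q"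
    and c_pos: "0 < c" and c_less_1: "c < 1"
begin

definition saw :: "nat \<Rightarrow> real" where
  "saw t = frac (real t * real h / real q) - 1 / 2"

definition ang :: "nat \<Rightarrow> real" where
  "ang t = pi * real t / real q"

definition shift :: "nat \<Rightarrow> real" where
  "shift t = pi * c * saw t / real q"

definition ratio :: "nat \<Rightarrow> real" where
  "ratio t = sin (ang t - shift t) / sin (ang t)"

definition lin_term :: "nat \<Rightarrow> real" where
  "lin_term t = shift t * cot (ang t)"

definition rel_shift :: "nat \<Rightarrow> real" where
  "rel_shift t = c * saw t / real t"

definition taylor_higher :: "nat \<Rightarrow> nat \<Rightarrow> real" where
  "taylor_higher m t = (\<Sum>j = 2..m. (1 / real j) * rel_shift t ^ j)"

definition M :: nat where
  "M = (q - 1) div 2"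

definition \<tau> :: nat where
  "\<tau> = nat \<lfloor>sqrt (real q)\<rfloor>"

definition D :: "nat \<Rightarrow> real" where
  "D t = (\<Sum>s = 1..t. saw s)"

definition S :: real where
  "S = (\<Sum>t = 1..M - 1. D t / (sin (ang t) * sin (ang (t + 1))))"

lemma q_pos: "0 < real q"
  using q_ge_16 by simp

lemma abs_saw_le: "\<bar>saw t\<bar> \<le> 1 / 2"
  unfolding saw_def
  using frac_ge_0[of "real t * real h / real q"] frac_lt_1[of "real t * real h / real q"]
  by (auto simp: abs_if)

lemma abs_c_saw_less: "\<bar>c * saw t\<bar> < 1 / 2"
proof -
  have "\<bar>c * saw t\<bar> = c * \<bar>saw t\<bar>" using c_pos by (simp add: abs_mult)
  also have "\<dots> \<le> c * (1 / 2)" using abs_saw_le c_pos by (intro mult_left_mono) auto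
  finally show ?thesis using c_less_1 by linarith
qed

text \<open>Coprimality keeps \<open>t h / q\<close> off the integers, where \<open>frac\<close> would not be odd.\<close>
lemma saw_reflect:
  assumes "0 < t" "t < q"
  shows "saw (q - t) = - saw t"
proof -
  let ?y = "real t * real h / real q"
  have not_int: "?y \<notin> \<int>"
  proof
    assume "?y \<in> \<int>"
    then obtain k where "?y = of_int k" by (auto elim: Ints_cases)
    then have "real t * real h = of_int k * real q" using q_pos by (simp add: field_simps)
    then have "int (t * h) = k * int q"
      by (metis of_int_eq_iff of_int_mult of_int_of_nat_eq of_nat_mult)
    then have "q dvd t * h" by (metis dvd_triv_right int_dvd_int_iff)
    then have "q dvd t" using coprime_h_q by (metis coprime_commute coprime_dvd_mult_left_iff)
    then show False using assms by (simp add: nat_dvd_not_less)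
  qed
  have "real (q - t) * real h / real q = - ?y + of_int (int h)"
    using assms q_pos by (simp add: of_nat_diff field_simps)
  then have "frac (real (q - t) * real h / real q) = frac (- ?y)"
    by (simp only: frac_add_of_int_right)
  with not_int show ?thesis unfolding saw_def by (simp add: frac_neg)
qed

lemma ang_minus_shift_eq: "ang t - shift t = pi * (real t - c * saw t) / real q"
  unfolding ang_def shift_def by (simp add: diff_divide_distrib right_diff_distrib mult.assoc)

lemma ratio_pos:
  assumes "0 < t" "t < q"
  shows "0 < ratio t"
proof -
  have "0 < real t - c * saw t" "real t - c * saw t < real q"
    using abs_c_saw_less[of t] assms by (auto simp: abs_less_iff)
  then have "0 < (real t - c * saw t) / real q" "(real t - c * saw t) / real q < 1"
    using q_pos by (auto simp: divide_simps)
  moreover have "pi * ((real t - c * saw t) / real q) < pi * 1"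
    using calculation by (intro mult_strict_left_mono) auto
  moreover have "0 < pi * ((real t - c * saw t) / real q)"
    using calculation by (intro mult_pos_pos) auto
  ultimately have "0 < sin (pi * ((real t - c * saw t) / real q))"
    by (intro sin_gt_zero) auto
  then have "0 < sin (ang t - shift t)"
    unfolding ang_minus_shift_eq by simp
  moreover have "0 < sin (ang t)"
    unfolding ang_def using assms q_pos by (intro sin_gt_zero) (auto simp: field_simps)
  ultimately show ?thesis unfolding ratio_def by simp
qed

lemma ratio_reflect:
  assumes "0 < t" "t < q"
  shows "ratio (q - t) = ratio t"
proof -
  have ang: "ang (q - t) = pi - ang t"
    unfolding ang_def using assms q_pos by (simp add: of_nat_diff field_simps)
  moreover have "shift (q - t) = - shift t"
    unfolding shift_def using saw_reflect[OF assms] by simp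
  ultimately have "ang (q - t) - shift (q - t) = pi - (ang t - shift t)" by simp
  then show ?thesis
    unfolding ratio_def ang by (simp only: sin_pi_minus)
qed

lemma ln_abs_prod_ratio: "ln \<bar>\<Prod>t = 1..q - 1. ratio t\<bar> = (\<Sum>t = 1..q - 1. ln (ratio t))"
proof -
  have pos: "0 < ratio t" if "t \<in> {1..q - 1}" for t
    using that by (intro ratio_pos) auto
  then have "\<bar>\<Prod>t = 1..q - 1. ratio t\<bar> = (\<Prod>t = 1..q - 1. ratio t)"
    by (intro abs_of_pos prod_pos) auto
  also have "ln \<dots> = (\<Sum>t = 1..q - 1. ln (ratio t))"
  proof (rule ln_prod)
    fix t assume "t \<in> {1..q - 1}"
    from pos[OF this] show "ratio t \<noteq> 0" by simp
  qed simp
  finally show ?thesis .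
qed

lemma sum_ln_ratio_fold: "(\<Sum>t = 1..q - 1. ln (ratio t)) = 2 * (\<Sum>t = 1..M. ln (ratio t))"
  unfolding M_def
proof (rule sum_symmetric_fold)
  fix t assume "2 * t = q"
  then have "0 < t" "t < q" "q - t = t" using q_ge_16 by auto
  then have "saw t = 0" using saw_reflect[of t] by simp
  then show "ln (ratio t) = 0"
    unfolding ratio_def shift_def by simp
qed (simp add: ratio_reflect)

context
  fixes t assumes t_ge_1: "1 \<le> t" and t_le_M: "t \<le> M"
begin

lemma two_t_less_q: "2 * t < q"
  using t_ge_1 t_le_M q_ge_16 unfolding M_def by linarith

lemma ang_pos: "0 < ang t"
  unfolding ang_def using t_ge_1 q_pos by simp

lemma ang_less_half_pi: "ang t < pi / 2"
proof -
  have "real t / real q < 1 / 2" using two_t_less_q q_pos by (simp add: divide_simps)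
  then have "pi * (real t / real q) < pi * (1 / 2)" by (intro mult_strict_left_mono) auto
  then show ?thesis unfolding ang_def by simp
qed

lemma abs_rel_shift_le: "\<bar>rel_shift t\<bar> \<le> 1 / (2 * real t)"
proof -
  have "\<bar>rel_shift t\<bar> = \<bar>c * saw t\<bar> / real t" unfolding rel_shift_def by (simp add: abs_divide)
  also have "\<dots> \<le> (1 / 2) / real t" using abs_c_saw_less[of t] t_ge_1 by (intro divide_right_mono) auto
  finally show ?thesis by simp
qed

lemma abs_rel_shift_le_half: "\<bar>rel_shift t\<bar> \<le> 1 / 2"
proof -
  have "1 / (2 * real t) \<le> 1 / 2" using t_ge_1 by (simp add: divide_simps)
  then show ?thesis using abs_rel_shift_le by linarith
qed

lemma lin_term_eq: "lin_term t = rel_shift t * (ang t * cot (ang t))"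
  unfolding lin_term_def shift_def rel_shift_def ang_def using t_ge_1 by (simp add: field_simps)

lemma abs_lin_term_le: "\<bar>lin_term t\<bar> \<le> \<bar>rel_shift t\<bar>"
proof -
  have "0 \<le> ang t * cot (ang t)" using ang_pos cot_gt_zero[OF ang_pos ang_less_half_pi] by simp
  moreover have "ang t * cot (ang t) \<le> 1" using ang_pos ang_less_half_pi by (intro x_cot_le_one) auto
  ultimately show ?thesis unfolding lin_term_eq abs_mult by (simp add: mult_left_le)
qed

lemma abs_lin_term_minus_rel_shift_le: "\<bar>lin_term t - rel_shift t\<bar> \<le> pi\<^sup>2 * real t / (4 * (real q)\<^sup>2)"
proof -
  have "0 \<le> 1 - ang t * cot (ang t)"
    using x_cot_le_one[of "ang t"] ang_pos ang_less_half_pi by simp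
  moreover have "lin_term t - rel_shift t = - (rel_shift t * (1 - ang t * cot (ang t)))"
    unfolding lin_term_eq by (simp add: algebra_simps)
  ultimately have "\<bar>lin_term t - rel_shift t\<bar> = \<bar>rel_shift t\<bar> * (1 - ang t * cot (ang t))"
    by (simp only: abs_minus_cancel abs_mult abs_of_nonneg)
  also have "\<dots> \<le> (1 / (2 * real t)) * (ang t ^ 2 / 2)"
    using x_cot_ge_one_minus_sq_half[of "ang t"] x_cot_le_one[of "ang t"] ang_pos ang_less_half_pi abs_rel_shift_le
    by (intro mult_mono) auto
  also have "\<dots> = pi\<^sup>2 * real t / (4 * (real q)\<^sup>2)"
    unfolding ang_def using t_ge_1 by (simp add: field_simps power2_eq_square)
  finally show ?thesis .
qed

lemma shift_sq_le: "(shift t)\<^sup>2 \<le> 4 / (real q)\<^sup>2"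
proof -
  have "pi * \<bar>c * saw t\<bar> \<le> 4 * (1 / 2)"
    using abs_c_saw_less[of t] pi_less_4 by (intro mult_mono) auto
  then have "\<bar>shift t\<bar> \<le> 2 / real q"
    unfolding shift_def using q_pos by (simp add: abs_mult abs_divide divide_right_mono)
  then have "\<bar>shift t\<bar>\<^sup>2 \<le> (2 / real q)\<^sup>2" by (intro power_mono) auto
  then show ?thesis by (simp add: power_divide)
qed

lemma abs_ratio_approx: "\<bar>ratio t - (1 - lin_term t)\<bar> \<le> 4 / (real q)\<^sup>2"
  using sin_diff_div_sin_approx[OF ang_pos ang_less_half_pi, of "shift t"]
    abs_lin_term_le abs_rel_shift_le_half shift_sq_le
  unfolding ratio_def lin_term_def by linarith

lemma four_div_q_sq_le: "4 / (real q)\<^sup>2 \<le> 1 / 64"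
proof -
  have "16\<^sup>2 \<le> (real q)\<^sup>2" using q_ge_16 by (intro power_mono) auto
  then show ?thesis by (simp add: divide_simps)
qed

lemma abs_ln_ratio_plus_lin_term_le:
  "\<bar>ln (ratio t) + lin_term t\<bar> \<le> 16 / (real q)\<^sup>2 + 1 / (2 * (real t)\<^sup>2)"
proof -
  have lin: "\<bar>lin_term t\<bar> \<le> 1 / 2" using abs_lin_term_le abs_rel_shift_le_half by linarith
  have "\<bar>ln (ratio t) - ln (1 - lin_term t)\<bar> \<le> \<bar>ratio t - (1 - lin_term t)\<bar> / (1 / 4)"
    using lin abs_ratio_approx four_div_q_sq_le by (intro abs_ln_diff_le) (auto simp: abs_le_iff)
  also have "\<dots> \<le> 16 / (real q)\<^sup>2" using abs_ratio_approx by simp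
  finally have "\<bar>ln (ratio t) - ln (1 - lin_term t)\<bar> \<le> 16 / (real q)\<^sup>2" .
  moreover have "\<bar>ln (1 - lin_term t) + lin_term t\<bar> \<le> 2 * (lin_term t)\<^sup>2"
    using abs_ln_one_plus_x_minus_x_bound[of "- lin_term t"] lin by simp
  moreover have "\<bar>lin_term t\<bar>\<^sup>2 \<le> (1 / (2 * real t))\<^sup>2"
    using abs_lin_term_le abs_rel_shift_le by (intro power_mono) auto
  then have "2 * (lin_term t)\<^sup>2 \<le> 1 / (2 * (real t)\<^sup>2)"
    by (simp add: power2_eq_square field_simps)
  ultimately show ?thesis by linarith
qed

lemma abs_ln_ratio_taylor_le:
  assumes "1 \<le> m"
  shows "\<bar>ln (ratio t) + lin_term t + taylor_higher m t\<bar>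
    \<le> 5 * (pi\<^sup>2 * real t / (4 * (real q)\<^sup>2)) + 16 / (real q)\<^sup>2 + (1 / 2) ^ m"
proof -
  have lin: "\<bar>lin_term t\<bar> \<le> 1 / 2" using abs_lin_term_le abs_rel_shift_le_half by linarith
  have "\<bar>ln (ratio t) - ln (1 - rel_shift t)\<bar> \<le> \<bar>ratio t - (1 - rel_shift t)\<bar> / (1 / 4)"
    using lin abs_rel_shift_le_half abs_ratio_approx four_div_q_sq_le
    by (intro abs_ln_diff_le) (auto simp: abs_le_iff)
  also have "\<dots> = 4 * \<bar>ratio t - (1 - rel_shift t)\<bar>" by simp
  moreover have "\<bar>ratio t - (1 - rel_shift t)\<bar>
      \<le> \<bar>ratio t - (1 - lin_term t)\<bar> + \<bar>lin_term t - rel_shift t\<bar>"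
    by linarith
  ultimately have log: "\<bar>ln (ratio t) - ln (1 - rel_shift t)\<bar>
      \<le> 16 / (real q)\<^sup>2 + 4 * \<bar>lin_term t - rel_shift t\<bar>"
    using abs_ratio_approx by (simp add: field_simps)
  have "{1..m} = insert 1 {2..m}" using assms by auto
  then have "(\<Sum>j = 1..m. (1 / real j) * rel_shift t ^ j) = rel_shift t + taylor_higher m t"
    unfolding taylor_higher_def by simp
  then have taylor: "\<bar>ln (1 - rel_shift t) + rel_shift t + taylor_higher m t\<bar>
      \<le> 2 * \<bar>rel_shift t\<bar> ^ (m + 1)"
    using ln_one_minus_taylor[OF abs_rel_shift_le_half, of m] by (simp add: add.assoc)
  have "\<bar>rel_shift t\<bar> ^ (m + 1) \<le> (1 / 2) ^ (m + 1)"
    using abs_rel_shift_le_half by (intro power_mono) auto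
  then have "2 * \<bar>rel_shift t\<bar> ^ (m + 1) \<le> (1 / 2) ^ m" by simp
  moreover have "\<bar>ln (ratio t) + lin_term t + taylor_higher m t\<bar>
      \<le> \<bar>ln (ratio t) - ln (1 - rel_shift t)\<bar>
        + \<bar>ln (1 - rel_shift t) + rel_shift t + taylor_higher m t\<bar> + \<bar>lin_term t - rel_shift t\<bar>"
    by linarith
  ultimately show ?thesis
    using log taylor abs_lin_term_minus_rel_shift_le by linarith
qed

end

lemma M_bounds: "q \<le> 2 * M + 2" "2 * M + 1 \<le> q"
  unfolding M_def using q_ge_16 by arith+

lemma \<tau>_bounds: "4 \<le> \<tau>" "(real \<tau>)\<^sup>2 \<le> real q" "\<tau> \<le> M"
proof -
  have sqrt_q: "4 \<le> sqrt (real q)" using q_ge_16 by (simp add: real_le_rsqrt)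
  then show "4 \<le> \<tau>" unfolding \<tau>_def by (simp add: le_nat_iff le_floor_iff)
  have "real \<tau> \<le> sqrt (real q)" unfolding \<tau>_def using sqrt_q by simp
  then have "(real \<tau>)\<^sup>2 \<le> (sqrt (real q))\<^sup>2" by (intro power_mono) auto
  then show sq: "(real \<tau>)\<^sup>2 \<le> real q" by simp
  have "4 * \<tau> \<le> \<tau> * \<tau>" using \<open>4 \<le> \<tau>\<close> by (intro mult_le_mono1)
  moreover have "\<tau> * \<tau> \<le> q" using sq by (simp add: power2_eq_square flip: of_nat_mult)
  ultimately show "\<tau> \<le> M" using M_bounds by linarith
qed

lemma \<tau>_pos: "0 < real \<tau>"
  using \<tau>_bounds(1) by simp

lemma \<tau>_le_q: "real \<tau> \<le> real q"
proof -
  have "real \<tau> \<le> (real \<tau>)\<^sup>2" using \<tau>_bounds(1) by (simp add: power2_eq_square)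
  then show ?thesis using \<tau>_bounds(2) by linarith
qed

lemma abs_D_le: "\<bar>D t\<bar> \<le> real t / 2"
proof -
  have "\<bar>D t\<bar> \<le> (\<Sum>s = 1..t. \<bar>saw s\<bar>)" unfolding D_def by (rule sum_abs)
  also have "\<dots> \<le> (\<Sum>s = 1..t. 1 / 2)" by (intro sum_mono abs_saw_le)
  finally show ?thesis by simp
qed

lemma sum_lin_term_by_parts:
  "(\<Sum>t = 1..M. lin_term t) = pi * c / real q * (D M * cot (ang M) + sin (pi / real q) * S)"
proof -
  have "(\<Sum>t = 1..M. lin_term t) = (\<Sum>t = 1..M. pi * c / real q * ((D t - D (t - 1)) * cot (ang t)))"
  proof (intro sum.cong refl)
    fix t assume "t \<in> {1..M}"
    then have "saw t = D t - D (t - 1)" unfolding D_def by (cases t) (auto simp: sum.cl_ivl_Suc)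
    then show "lin_term t = pi * c / real q * ((D t - D (t - 1)) * cot (ang t))"
      unfolding lin_term_def shift_def by simp
  qed
  also have "\<dots> = pi * c / real q * (\<Sum>t = 1..M. (D t - D (t - 1)) * cot (ang t))"
    by (simp add: sum_distrib_left)
  also have "(\<Sum>t = 1..M. (D t - D (t - 1)) * cot (ang t))
      = D M * cot (ang M) + (\<Sum>t = 1..M - 1. D t * (cot (ang t) - cot (ang (t + 1))))"
    by (rule summation_by_parts) (simp add: D_def)
  also have "(\<Sum>t = 1..M - 1. D t * (cot (ang t) - cot (ang (t + 1)))) = sin (pi / real q) * S"
    unfolding S_def sum_distrib_left
  proof (intro sum.cong refl)
    fix t assume "t \<in> {1..M - 1}"
    then have "1 \<le> t" "t \<le> M" "1 \<le> t + 1" "t + 1 \<le> M" by auto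
    then have "0 < sin (ang t)" "0 < sin (ang (t + 1))"
      using ang_pos ang_less_half_pi by (auto intro!: sin_gt_zero2)
    moreover have "ang (t + 1) - ang t = pi / real q"
      unfolding ang_def by (simp add: distrib_left add_divide_distrib)
    ultimately show "D t * (cot (ang t) - cot (ang (t + 1)))
        = sin (pi / real q) * (D t / (sin (ang t) * sin (ang (t + 1))))"
      by (simp add: cot_diff_eq)
  qed
  finally show ?thesis .
qed

lemma cot_ang_M_bounds: "0 \<le> cot (ang M)" "cot (ang M) \<le> 24 / real q"
proof -
  have M: "1 \<le> M" "M \<le> M" using M_bounds q_ge_16 by linarith+
  note ang = ang_pos[OF M] ang_less_half_pi[OF M]
  show "0 \<le> cot (ang M)" using cot_gt_zero[OF ang] by simp
  have "pi / 2 - ang M = pi * (real q - 2 * real M) / (2 * real q)"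
    unfolding ang_def using q_pos by (simp add: field_simps)
  also have "\<dots> \<le> pi * 2 / (2 * real q)"
    using M_bounds q_pos by (intro divide_right_mono mult_left_mono) auto
  also have "\<dots> \<le> 4 / real q" using pi_less_4 q_pos by (simp add: divide_simps)
  finally have "pi / 2 - ang M \<le> 4 / real q" .
  moreover have "cos (ang M) \<le> pi / 2 - ang M"
    using ang sin_x_le_x[of "pi / 2 - ang M"] by (simp add: sin_cos_eq)
  moreover have "pi / 4 \<le> ang M"
  proof -
    have "real q \<le> 4 * real M" using M_bounds q_ge_16 by linarith
    then have "pi * real q \<le> pi * (4 * real M)" by (intro mult_left_mono) auto
    then show ?thesis unfolding ang_def using q_pos by (simp add: divide_simps)
  qed
  then have "1 / 6 \<le> sin (ang M)"
    using x_div_3_le_sin[of "ang M"] ang pi_ge_two pi_less_4 by linarith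
  ultimately have "cos (ang M) / sin (ang M) \<le> (4 / real q) / (1 / 6)"
    using ang by (intro frac_le cos_ge_zero) auto
  then show "cot (ang M) \<le> 24 / real q" by (simp add: cot_def)
qed

lemma sin_ang_ge:
  assumes "1 \<le> t" "t \<le> M"
  shows "2 * real t / (3 * real q) \<le> sin (ang t)"
proof -
  have "ang t / 3 \<le> sin (ang t)"
    using ang_pos[OF assms] ang_less_half_pi[OF assms] pi_less_4 by (intro x_div_3_le_sin) auto
  moreover have "2 * real t / (3 * real q) \<le> ang t / 3"
    unfolding ang_def using pi_ge_two q_pos by (simp add: divide_simps mult_right_mono)
  ultimately show ?thesis by linarith
qed

lemma abs_S_le: "\<bar>S\<bar> \<le> real q ^ 3"
proof -
  have "\<bar>S\<bar> \<le> (\<Sum>t = 1..M - 1. \<bar>D t / (sin (ang t) * sin (ang (t + 1)))\<bar>)"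
    unfolding S_def by (rule sum_abs)
  also have "\<dots> \<le> (\<Sum>t = 1..M - 1. 2 * (real q)\<^sup>2)"
  proof (intro sum_mono)
    fix t assume "t \<in> {1..M - 1}"
    then have t: "1 \<le> t" "t \<le> M" "t + 1 \<le> M" by auto
    define l where "l = 2 * real t / (3 * real q)"
    have l: "0 < l" using t q_pos by (simp add: l_def)
    have "l \<le> sin (ang t)" using t sin_ang_ge[of t] by (simp add: l_def)
    moreover have "l \<le> sin (ang (t + 1))"
      using t sin_ang_ge[of "t + 1"] q_pos by (simp add: l_def divide_simps)
    ultimately have prod: "l * l \<le> sin (ang t) * sin (ang (t + 1))"
      using l by (intro mult_mono) auto
    have "\<bar>D t / (sin (ang t) * sin (ang (t + 1)))\<bar> = \<bar>D t\<bar> / (sin (ang t) * sin (ang (t + 1)))"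
      using prod mult_pos_pos[OF l l] by (simp add: abs_divide)
    also have "\<dots> \<le> (real t / 2) / (l * l)"
      using abs_D_le[of t] prod l by (intro frac_le) auto
    also have "\<dots> = 9 * (real q)\<^sup>2 / (8 * real t)"
      using t q_pos by (simp add: l_def field_simps power2_eq_square)
    also have "\<dots> \<le> 9 * (real q)\<^sup>2 / (8 * 1)"
      using t by (intro divide_left_mono) auto
    also have "\<dots> \<le> 2 * (real q)\<^sup>2" by simp
    finally show "\<bar>D t / (sin (ang t) * sin (ang (t + 1)))\<bar> \<le> 2 * (real q)\<^sup>2" .
  qed
  also have "\<dots> \<le> real q / 2 * (2 * (real q)\<^sup>2)"
    using M_bounds by (simp add: mult_right_mono)
  also have "\<dots> = real q ^ 3" by (simp add: power2_eq_square power3_eq_cube)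
  finally show ?thesis .
qed

lemma small_t_sum_le: "\<bar>\<Sum>t = 1..\<tau>. ln (ratio t) + lin_term t + taylor_higher \<tau> t\<bar> \<le> 38 / real \<tau>"
proof -
  let ?Q = "real q" and ?T = "real \<tau>"
  have "\<bar>\<Sum>t = 1..\<tau>. ln (ratio t) + lin_term t + taylor_higher \<tau> t\<bar>
      \<le> (\<Sum>t = 1..\<tau>. \<bar>ln (ratio t) + lin_term t + taylor_higher \<tau> t\<bar>)"
    by (rule sum_abs)
  also have "\<dots> \<le> (\<Sum>t = 1..\<tau>. 5 * (pi\<^sup>2 / (4 * ?Q\<^sup>2)) * real t + 16 / ?Q\<^sup>2 + (1 / 2) ^ \<tau>)"
  proof (intro sum_mono)
    fix t assume "t \<in> {1..\<tau>}"
    then have "1 \<le> t" "t \<le> M" using \<tau>_bounds(3) by auto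
    from abs_ln_ratio_taylor_le[OF this, of \<tau>] \<tau>_bounds(1)
    show "\<bar>ln (ratio t) + lin_term t + taylor_higher \<tau> t\<bar>
        \<le> 5 * (pi\<^sup>2 / (4 * ?Q\<^sup>2)) * real t + 16 / ?Q\<^sup>2 + (1 / 2) ^ \<tau>" by simp
  qed
  also have "\<dots> = 5 * (pi\<^sup>2 / (4 * ?Q\<^sup>2)) * (\<Sum>t = 1..\<tau>. real t) + ?T * (16 / ?Q\<^sup>2) + ?T * (1 / 2) ^ \<tau>"
    by (simp add: sum.distrib sum_distrib_left)
  also have "\<dots> \<le> 5 * (16 / (4 * ?Q\<^sup>2)) * ?Q + ?Q * (16 / ?Q\<^sup>2) + 2 / ?T"
  proof (intro add_mono mult_mono)
    have "pi\<^sup>2 \<le> 4\<^sup>2" using pi_less_4 by (intro power_mono) auto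
    then show "pi\<^sup>2 / (4 * ?Q\<^sup>2) \<le> 16 / (4 * ?Q\<^sup>2)" by (intro divide_right_mono) auto
    have "(\<Sum>t = 1..\<tau>. real t) \<le> (\<Sum>t = 1..\<tau>. ?T)" by (intro sum_mono) auto
    then show "(\<Sum>t = 1..\<tau>. real t) \<le> ?Q" using \<tau>_bounds(2) by (simp add: power2_eq_square)
    have "\<tau>\<^sup>2 \<le> (2::nat) ^ Suc \<tau>" by (rule square_le_two_pow_Suc)
    then have "?T\<^sup>2 \<le> 2 * 2 ^ \<tau>" by (metis of_nat_le_iff of_nat_numeral of_nat_power power_Suc)
    then show "?T * (1 / 2) ^ \<tau> \<le> 2 / ?T"
      using \<tau>_pos by (simp add: divide_simps power2_eq_square power_one_over)
  qed (use \<tau>_le_q in \<open>auto intro: sum_nonneg\<close>)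
  also have "\<dots> = 36 / ?Q + 2 / ?T" using q_pos by (simp add: field_simps power2_eq_square)
  also have "\<dots> \<le> 36 / ?T + 2 / ?T"
    using \<tau>_le_q \<tau>_pos by (intro add_mono divide_left_mono) auto
  also have "\<dots> = 38 / ?T" by (simp add: add_divide_distrib[symmetric])
  finally show ?thesis .
qed

lemma large_t_sum_le: "\<bar>\<Sum>t\<in>{\<tau><..M}. ln (ratio t) + lin_term t\<bar> \<le> 17 / real \<tau>"
proof -
  let ?Q = "real q" and ?T = "real \<tau>"
  have "\<bar>\<Sum>t\<in>{\<tau><..M}. ln (ratio t) + lin_term t\<bar> \<le> (\<Sum>t\<in>{\<tau><..M}. \<bar>ln (ratio t) + lin_term t\<bar>)"
    by (rule sum_abs)
  also have "\<dots> \<le> (\<Sum>t\<in>{\<tau><..M}. 16 / ?Q\<^sup>2 + (1 / 2) * (1 / (real t)\<^sup>2))"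
    using abs_ln_ratio_plus_lin_term_le \<tau>_bounds(1) by (intro sum_mono) simp
  also have "\<dots> = real (M - \<tau>) * (16 / ?Q\<^sup>2) + (1 / 2) * (\<Sum>t\<in>{\<tau><..M}. 1 / (real t)\<^sup>2)"
    by (simp add: sum.distrib sum_distrib_left)
  also have "\<dots> \<le> ?Q * (16 / ?Q\<^sup>2) + (1 / 2) * (1 / ?T)"
  proof (intro add_mono mult_right_mono mult_left_mono)
    show "real (M - \<tau>) \<le> ?Q" using M_bounds by simp
    have "(\<Sum>t\<in>{\<tau><..M}. 1 / (real t)\<^sup>2) \<le> 1 / ?T - 1 / real M"
      using \<tau>_bounds by (intro sum_inverse_square_le) auto
    moreover have "0 \<le> 1 / real M" by simp
    ultimately show "(\<Sum>t\<in>{\<tau><..M}. 1 / (real t)\<^sup>2) \<le> 1 / ?T" by linarith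
  qed auto
  also have "\<dots> = 16 / ?Q + (1 / 2) * (1 / ?T)" using q_pos by (simp add: power2_eq_square)
  also have "\<dots> \<le> 16 / ?T + (1 / 2) * (1 / ?T)"
    using \<tau>_le_q \<tau>_pos by (intro add_mono divide_left_mono) auto
  also have "\<dots> \<le> 17 / ?T" using \<tau>_pos by (simp add: divide_simps)
  finally show ?thesis .
qed

lemma abs_two_pi_c_div_q_le: "\<bar>2 * pi * c / real q\<bar> \<le> 8 / real q"
proof -
  have "2 * pi * c \<le> 2 * 4 * 1" using pi_less_4 c_pos c_less_1 by (intro mult_mono) auto
  then show ?thesis using c_pos q_pos by (simp add: abs_divide abs_mult divide_right_mono)
qed

lemma boundary_term_le: "\<bar>2 * pi * c / real q * (D M * cot (ang M))\<bar> \<le> 48 / real q"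
proof -
  have "\<bar>D M\<bar> \<le> real q / 4" using abs_D_le[of M] M_bounds by simp
  then have "\<bar>D M * cot (ang M)\<bar> \<le> (real q / 4) * (24 / real q)"
    unfolding abs_mult using cot_ang_M_bounds by (intro mult_mono) auto
  also have "\<dots> = 6" using q_pos by simp
  finally have "\<bar>D M * cot (ang M)\<bar> \<le> 6" .
  then have "\<bar>2 * pi * c / real q\<bar> * \<bar>D M * cot (ang M)\<bar> \<le> (8 / real q) * 6"
    using abs_two_pi_c_div_q_le by (intro mult_mono) auto
  then show ?thesis by (simp add: abs_mult)
qed

lemma sin_defect_term_le:
  "\<bar>2 * pi * c / real q * ((sin (pi / real q) - pi / real q) * S)\<bar> \<le> 88 / real q"
proof -
  have "\<bar>sin (pi / real q) - pi / real q\<bar> \<le> \<bar>pi / real q\<bar> ^ 3 / 6" by (rule abs_sin_minus_le)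
  also have "\<dots> \<le> (4 / real q) ^ 3 / 6"
    using pi_less_4 q_pos by (intro divide_right_mono power_mono) (auto simp: divide_right_mono)
  also have "\<dots> = (64 / 6) / real q ^ 3" by (simp add: power_divide)
  finally have "\<bar>(sin (pi / real q) - pi / real q) * S\<bar> \<le> ((64 / 6) / real q ^ 3) * real q ^ 3"
    unfolding abs_mult using abs_S_le by (intro mult_mono) auto
  also have "\<dots> = 64 / 6" using q_pos by simp
  finally have "\<bar>2 * pi * c / real q\<bar> * \<bar>(sin (pi / real q) - pi / real q) * S\<bar> \<le> (8 / real q) * (64 / 6)"
    using abs_two_pi_c_div_q_le by (intro mult_mono) auto
  also have "\<dots> \<le> 88 / real q" using q_pos by (simp add: divide_simps)
  finally show ?thesis by (simp only: abs_mult)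
qed

lemma sum_ln_ratio_decomposition:
  "(\<Sum>t = 1..q - 1. ln (ratio t))
      - (- 2 * pi\<^sup>2 * c / (real q)\<^sup>2 * S - 2 * (\<Sum>t = 1..\<tau>. taylor_higher \<tau> t))
    = 2 * ((\<Sum>t = 1..\<tau>. ln (ratio t) + lin_term t + taylor_higher \<tau> t)
           + (\<Sum>t\<in>{\<tau><..M}. ln (ratio t) + lin_term t))
      - 2 * pi * c / real q * (D M * cot (ang M))
      - 2 * pi * c / real q * ((sin (pi / real q) - pi / real q) * S)"
proof -
  have split: "(\<Sum>t = 1..M. g t) = (\<Sum>t = 1..\<tau>. g t) + (\<Sum>t\<in>{\<tau><..M}. g t)" for g :: "nat \<Rightarrow> real"
  proof -
    have "{1..M} = {1..\<tau>} \<union> {\<tau><..M}" using \<tau>_bounds(1,3) by auto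
    then show ?thesis by (simp add: sum.union_disjoint ivl_disj_int)
  qed
  have "(\<Sum>t = 1..M. ln (ratio t))
      = (\<Sum>t = 1..\<tau>. ln (ratio t) + lin_term t + taylor_higher \<tau> t)
        + (\<Sum>t\<in>{\<tau><..M}. ln (ratio t) + lin_term t)
        - (\<Sum>t = 1..M. lin_term t) - (\<Sum>t = 1..\<tau>. taylor_higher \<tau> t)"
    unfolding split[of "\<lambda>t. ln (ratio t)"] split[of lin_term] by (simp add: sum.distrib)
  moreover have "(\<Sum>t = 1..M. lin_term t)
      = pi * c / real q * (D M * cot (ang M)) + pi * c / real q * (sin (pi / real q) * S)"
    unfolding sum_lin_term_by_parts by (simp add: distrib_left)
  moreover have "2 * pi * c / real q * ((sin (pi / real q) - pi / real q) * S)
      = 2 * (pi * c / real q * (sin (pi / real q) * S)) - 2 * pi\<^sup>2 * c / (real q)\<^sup>2 * S"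
    using q_pos by (simp add: field_simps power2_eq_square)
  ultimately show ?thesis
    unfolding sum_ln_ratio_fold by simp
qed

lemma sum_ln_ratio_approx:
  "\<bar>(\<Sum>t = 1..q - 1. ln (ratio t))
      - (- 2 * pi\<^sup>2 * c / (real q)\<^sup>2 * S - 2 * (\<Sum>t = 1..\<tau>. taylor_higher \<tau> t))\<bar>
    \<le> 250 / real \<tau>"
proof -
  have triangle: "\<bar>2 * (x + y) - u - w\<bar> \<le> 2 * \<bar>x\<bar> + 2 * \<bar>y\<bar> + \<bar>u\<bar> + \<bar>w\<bar>" for x y u w :: real
    by (simp add: abs_if)
  have terms: "2 * \<bar>\<Sum>t = 1..\<tau>. ln (ratio t) + lin_term t + taylor_higher \<tau> t\<bar>
      + 2 * \<bar>\<Sum>t\<in>{\<tau><..M}. ln (ratio t) + lin_term t\<bar>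
      + \<bar>2 * pi * c / real q * (D M * cot (ang M))\<bar>
      + \<bar>2 * pi * c / real q * ((sin (pi / real q) - pi / real q) * S)\<bar>
      \<le> 2 * (38 / real \<tau>) + 2 * (17 / real \<tau>) + 48 / real q + 88 / real q"
    using small_t_sum_le large_t_sum_le boundary_term_le sin_defect_term_le
    by (intro add_mono mult_left_mono) auto
  have "48 / real q \<le> 48 / real \<tau>" "88 / real q \<le> 88 / real \<tau>"
    using \<tau>_le_q \<tau>_pos by (intro divide_left_mono; simp)+
  moreover have "2 * (38 / real \<tau>) + 2 * (17 / real \<tau>) + 48 / real \<tau> + 88 / real \<tau> \<le> 250 / real \<tau>"
    using \<tau>_pos by (simp add: divide_simps)
  ultimately have "2 * (38 / real \<tau>) + 2 * (17 / real \<tau>) + 48 / real q + 88 / real q \<le> 250 / real \<tau>"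
    by linarith
  then show ?thesis
    unfolding sum_ln_ratio_decomposition by (rule order_trans[OF triangle order_trans[OF terms]])
qed

end

lemma ln_Bn_approx:
  fixes \<alpha> :: real
  assumes "0 < \<alpha>" and "\<alpha> < 1" and "\<alpha> \<notin> \<rat>" and "17 \<le> n"
  shows "\<bar>ln (Bn \<alpha> n)
      - ( - 2 * pi\<^sup>2 * cn \<alpha> n / real (cf_q \<alpha> n) ^ 2
            * (\<Sum>t = 1..Mn \<alpha> n - 1. Dt t (alpha_minus \<alpha> n)
                 / (sin (pi * real t / real (cf_q \<alpha> n)) * sin (pi * real (t + 1) / real (cf_q \<alpha> n))))
          - 2 * (\<Sum>t = 1..taun \<alpha> n. \<Sum>j = 2..taun \<alpha> n.
                   (1 / real j) * (cn \<alpha> n * xi \<alpha> n t / real t) ^ j))\<bar>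
    \<le> 250 / real (taun \<alpha> n)"
proof -
  obtain m where n: "n = Suc m" using assms(4) by (cases n) auto
  interpret sine_product "cf_q \<alpha> n" "cf_q \<alpha> m" "cn \<alpha> n"
  proof
    show "16 \<le> cf_q \<alpha> n" using cf_q_Suc_ge[OF assms(1-3), of m] n assms(4) by simp
    show "coprime (cf_q \<alpha> m) (cf_q \<alpha> n)" unfolding n by (rule coprime_cf_q_Suc)
    show "0 < cn \<alpha> n" "cn \<alpha> n < 1" unfolding n by (rule cn_pos[OF assms(1-3)] cn_less_1[OF assms(1-3)])+
  qed
  have xi: "xi \<alpha> n t = saw t" for t
    unfolding xi_def saw_def using n by simp
  have factor: "snt \<alpha> n t / (2 * sin (pi * real t / real (cf_q \<alpha> n))) = ratio t" for t
    using abs_Lambda_eq[OF assms(1-3), of m, folded n]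
    unfolding snt_def ratio_def ang_def shift_def xi by (simp add: algebra_simps)
  have "ln (Bn \<alpha> n) = (\<Sum>t = 1..cf_q \<alpha> n - 1. ln (ratio t))"
    unfolding Bn_def factor by (rule ln_abs_prod_ratio)
  moreover have "Dt t (alpha_minus \<alpha> n) = D t" for t
    unfolding Dt_def D_def saw_def alpha_minus_def using n by (simp add: field_simps)
  ultimately show ?thesis
    using sum_ln_ratio_approx
    unfolding S_def taylor_higher_def rel_shift_def Mn_def M_def taun_def \<tau>_def ang_def xi
    by simp
qed

theorem lemma4p4:
  fixes \<alpha> :: real
  assumes "0 < \<alpha>" and "\<alpha> < 1" and "\<alpha> \<notin> \<rat>"
  shows "\<exists>C. \<exists>N. \<forall>n \<ge> N.
    \<bar>ln (Bn \<alpha> n)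
      - ( - 2 * pi\<^sup>2 * cn \<alpha> n / real (cf_q \<alpha> n) ^ 2
            * (\<Sum>t = 1..Mn \<alpha> n - 1. Dt t (alpha_minus \<alpha> n)
                 / (sin (pi * real t / real (cf_q \<alpha> n)) * sin (pi * real (t + 1) / real (cf_q \<alpha> n))))
          - 2 * (\<Sum>t = 1..taun \<alpha> n. \<Sum>j = 2..taun \<alpha> n.
                   (1 / real j) * (cn \<alpha> n * xi \<alpha> n t / real t) ^ j))\<bar>
    \<le> C / real (taun \<alpha> n)"
  using ln_Bn_approx[OF assms] by blast

end
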